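(* Let $(\Omega,\mathcal{F})$ be a measurable space and $\mathcal{P}=\{P_1,\dots,P_K\}$ ($K\ge2$) a finite set of probability measures on it, with $\hat{\mathbb{E}}[Z]=\max_{1\le i\le K}E_{P_i}[Z]$. Let $X,Y$ be random variables with $\hat{\mathbb{E}}[X^2]+\hat{\mathbb{E}}[Y^2]<\infty$. Then $$\overline{C}(X,Y)=\max_{1\le i<j\le K}\overline{C}_{ij}(X,Y),$$ where $\overline{C}_{ij}(X,Y)$ denotes the upper covariance of $X$ and $Y$ under the two-element set $\{P_i,P_j\}$.
   Context: For a set $\mathcal{Q}$ of probability measures with $\hat{\mathbb{E}}_{\mathcal{Q}}[Z]=\sup_{P\in\mathcal{Q}}E_P[Z]$ and a random variable $W$ with $\hat{\mathbb{E}}_{\mathcal{Q}}[W^2]<\infty$: $\overline{\mu}_W=\hat{\mathbb{E}}_{\mathcal{Q}}[W]$, $\underline{\mu}_W=-\hat{\mathbb{E}}_{\mathcal{Q}}[-W]$, $M_W=[\underline{\mu}_W,\overline{\mu}_W]$, and the upper covariance under $\mathcal{Q}$ is $\max_{\mu_2\in M_Y}\min_{\mu_1\in M_X}\hat{\mathbb{E}}_{\mathcal{Q}}[(X-\mu_1)(Y-\mu_2)]$. $\overline{C}(X,Y)$ is this quantity for $\mathcal{Q}=\mathcal{P}$ and $\overline{C}_{ij}(X,Y)$ for $\mathcal{Q}=\{P_i,P_j\}$. *)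

theory Defs
  imports "HOL-Probability.Probability"
begin

definition upper_exp :: "'a measure set \<Rightarrow> ('a \<Rightarrow> real) \<Rightarrow> real" where
  "upper_exp Q Z = (SUP P\<in>Q. integral\<^sup>L P Z)"

definition upper_mean :: "'a measure set \<Rightarrow> ('a \<Rightarrow> real) \<Rightarrow> real" where
  "upper_mean Q W = upper_exp Q W"

definition lower_mean :: "'a measure set \<Rightarrow> ('a \<Rightarrow> real) \<Rightarrow> real" where
  "lower_mean Q W = - upper_exp Q (\<lambda>\<omega>. - W \<omega>)"

text \<open>Upper covariance: max over mu2 in M_Y of min over mu1 in M_X of
  upper_exp Q ((X - mu1)(Y - mu2)).  The max/min are written as SUP/INF
  over the compact intervals (they are attained by continuity).\<close>
definition upper_cov :: "'a measure set \<Rightarrow> ('a \<Rightarrow> real) \<Rightarrow> ('a \<Rightarrow> real) \<Rightarrow> real" where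
  "upper_cov Q X Y =
     (SUP \<mu>2\<in>{lower_mean Q Y..upper_mean Q Y}.
        INF \<mu>1\<in>{lower_mean Q X..upper_mean Q X}.
          upper_exp Q (\<lambda>\<omega>. (X \<omega> - \<mu>1) * (Y \<omega> - \<mu>2)))"

end

theory Submission
  imports Defs
begin

text \<open>Write \<open>a k\<close>, \<open>b k\<close>, \<open>d k\<close> for the mean of \<open>X\<close>, the mean of \<open>Y\<close> and the covariance
  under \<open>P\<^sub>k\<close>; then \<open>E\<^sub>k[(X - x)(Y - y)] = d k + (a k - x)(b k - y)\<close>, and the covariance of
  \<open>X\<close> and \<open>Y\<close> under the mixture \<open>l P\<^sub>i + (1 - l) P\<^sub>j\<close> is
  \<open>l d i + (1 - l) d j + l (1 - l)(a i - a j)(b i - b j)\<close>.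
  The upper covariance of a finite family equals the largest covariance under such a two-point
  mixture. It is at least that value: if \<open>y\<close> is the mixture mean of \<open>Y\<close>, the
  \<open>l\<close>-weighted average of \<open>E\<^sub>i[(X - x)(Y - y)]\<close> and \<open>E\<^sub>j[(X - x)(Y - y)]\<close> does not depend
  on \<open>x\<close> and equals the mixture covariance. It is at most that value: for fixed \<open>y\<close>,
  each measure bounds \<open>x\<close> by a half-line, and the mixture bound makes every
  lower half-line meet every upper one, so all of them meet.
  Since only pairs of measures enter, the upper covariance of the whole family is the
  largest upper covariance of a pair.\<close>

definition cross_moment ::
    "('i \<Rightarrow> real) \<Rightarrow> ('i \<Rightarrow> real) \<Rightarrow> ('i \<Rightarrow> real) \<Rightarrow> 'i \<Rightarrow> real \<Rightarrow> real \<Rightarrow> real" where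
  "cross_moment a b d k x y = d k + (a k - x) * (b k - y)"

definition upper_cross_moment ::
    "('i \<Rightarrow> real) \<Rightarrow> ('i \<Rightarrow> real) \<Rightarrow> ('i \<Rightarrow> real) \<Rightarrow> 'i set \<Rightarrow> real \<Rightarrow> real \<Rightarrow> real" where
  "upper_cross_moment a b d S x y = Max ((\<lambda>k. cross_moment a b d k x y) ` S)"

definition mixture_cov ::
    "('i \<Rightarrow> real) \<Rightarrow> ('i \<Rightarrow> real) \<Rightarrow> ('i \<Rightarrow> real) \<Rightarrow> real \<Rightarrow> 'i \<Rightarrow> 'i \<Rightarrow> real" where
  "mixture_cov a b d l i j = l * d i + (1 - l) * d j + l * (1 - l) * (a i - a j) * (b i - b j)"

definition moment_upper_cov ::
    "('i \<Rightarrow> real) \<Rightarrow> ('i \<Rightarrow> real) \<Rightarrow> ('i \<Rightarrow> real) \<Rightarrow> 'i set \<Rightarrow> real" where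
  "moment_upper_cov a b d S =
     (SUP y\<in>{Min (b ` S)..Max (b ` S)}. INF x\<in>{Min (a ` S)..Max (a ` S)}.
        upper_cross_moment a b d S x y)"

lemma mixture_cov_same: "mixture_cov a b d l k k = d k"
  by (simp add: mixture_cov_def algebra_simps)

lemma mixture_cov_one: "mixture_cov a b d 1 i j = d i"
  by (simp add: mixture_cov_def)

lemma mixture_cov_eq_average_cross_moment:
  assumes "y = l * b i + (1 - l) * b j"
  shows "l * cross_moment a b d i x y + (1 - l) * cross_moment a b d j x y = mixture_cov a b d l i j"
  unfolding cross_moment_def mixture_cov_def assms by (simp add: algebra_simps)

lemma cross_moment_le_upper_cross_moment:
  "finite S \<Longrightarrow> k \<in> S \<Longrightarrow> cross_moment a b d k x y \<le> upper_cross_moment a b d S x y"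
  unfolding upper_cross_moment_def by simp

lemma mixture_cov_le_upper_cross_moment:
  assumes "finite S" "i \<in> S" "j \<in> S" "0 \<le> l" "l \<le> 1" "y = l * b i + (1 - l) * b j"
  shows "mixture_cov a b d l i j \<le> upper_cross_moment a b d S x y"
proof -
  let ?U = "upper_cross_moment a b d S x y"
  have "l * cross_moment a b d i x y + (1 - l) * cross_moment a b d j x y \<le> l * ?U + (1 - l) * ?U"
    using assms by (intro add_mono mult_left_mono cross_moment_le_upper_cross_moment) auto
  then show ?thesis
    using mixture_cov_eq_average_cross_moment[of y l b i j a d x, OF assms(6)]
    by (simp add: algebra_simps)
qed

lemma upper_cross_moment_antimono:
  assumes "finite S" "S \<noteq> {}" "\<And>k. k \<in> S \<Longrightarrow> x \<le> a k" "y' \<le> y"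
  shows "upper_cross_moment a b d S x y \<le> upper_cross_moment a b d S x y'"
  unfolding upper_cross_moment_def
proof (rule Max.boundedI)
  fix g assume "g \<in> (\<lambda>k. cross_moment a b d k x y) ` S"
  then obtain k where k: "k \<in> S" and g: "g = cross_moment a b d k x y" by blast
  have "(a k - x) * (b k - y) \<le> (a k - x) * (b k - y')"
    using assms(3)[OF k] assms(4) by (intro mult_left_mono) auto
  then have "g \<le> cross_moment a b d k x y'"
    by (simp add: g cross_moment_def)
  also have "\<dots> \<le> upper_cross_moment a b d S x y'"
    using assms(1) k by (rule cross_moment_le_upper_cross_moment)
  finally show "g \<le> Max ((\<lambda>k. cross_moment a b d k x y') ` S)"
    unfolding upper_cross_moment_def .
qed (use assms in auto)

lemma Min_le_Max_image:
  fixes f :: "'i \<Rightarrow> 'b::linorder"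
  assumes "finite S" "k \<in> S"
  shows "Min (f ` S) \<le> Max (f ` S)"
  using assms by (intro order_trans[OF Min_le Max_ge]) auto

lemma mem_Min_Max_image_mixture:
  fixes b :: "'i \<Rightarrow> real"
  assumes "finite S" "S \<noteq> {}" "y \<in> {Min (b ` S)..Max (b ` S)}"
  obtains i j l where "i \<in> S" "j \<in> S" "0 \<le> l" "l \<le> 1" "y = l * b i + (1 - l) * b j"
proof -
  have "Min (b ` S) \<in> b ` S" "Max (b ` S) \<in> b ` S" using assms(1,2) by simp_all
  then obtain i j where "i \<in> S" "b i = Min (b ` S)" "j \<in> S" "b j = Max (b ` S)"
    by (metis imageE)
  moreover from this have "y \<in> closed_segment (b i) (b j)"
    using assms(3) by (simp add: closed_segment_eq_real_ivl)
  then obtain u where "0 \<le> u" "u \<le> 1" "y = (1 - u) * b i + u * b j"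
    by (auto simp: in_segment)
  ultimately show ?thesis
    using that[of i j "1 - u"] by simp
qed

lemma bdd_below_upper_cross_moment:
  assumes "finite S" "S \<noteq> {}" "y \<in> {Min (b ` S)..Max (b ` S)}"
  shows "bdd_below ((\<lambda>x. upper_cross_moment a b d S x y) ` A)"
proof -
  obtain i j l where "i \<in> S" "j \<in> S" "0 \<le> l" "l \<le> 1" "y = l * b i + (1 - l) * b j"
    using mem_Min_Max_image_mixture[OF assms] .
  then show ?thesis
    using mixture_cov_le_upper_cross_moment[OF assms(1)] by (intro bdd_belowI) blast
qed

lemma mixture_cov_le_moment_upper_cov:
  assumes "finite S" "i \<in> S" "j \<in> S" "0 \<le> l" "l \<le> 1"
  shows "mixture_cov a b d l i j \<le> moment_upper_cov a b d S"
proof -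
  have ne: "S \<noteq> {}" using assms(2) by auto
  define y where "y = l * b i + (1 - l) * b j"
  have "Min (b ` S) \<le> b i" "Min (b ` S) \<le> b j" "b i \<le> Max (b ` S)" "b j \<le> Max (b ` S)"
    using assms(1-3) by auto
  then have "l * Min (b ` S) + (1 - l) * Min (b ` S) \<le> y" "y \<le> l * Max (b ` S) + (1 - l) * Max (b ` S)"
    unfolding y_def using assms(4,5) by (auto intro!: add_mono mult_left_mono)
  then have y: "y \<in> {Min (b ` S)..Max (b ` S)}" by (simp add: algebra_simps)
  have "mixture_cov a b d l i j
      \<le> (INF x\<in>{Min (a ` S)..Max (a ` S)}. upper_cross_moment a b d S x y)"
    using Min_le_Max_image[OF assms(1,2)] assms
    by (intro cINF_greatest mixture_cov_le_upper_cross_moment) (auto simp: y_def)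
  also have "\<dots> \<le> moment_upper_cov a b d S"
    unfolding moment_upper_cov_def
  proof (rule cSUP_upper[OF y], rule bdd_aboveI2)
    fix y' assume y': "y' \<in> {Min (b ` S)..Max (b ` S)}"
    have "(INF x\<in>{Min (a ` S)..Max (a ` S)}. upper_cross_moment a b d S x y')
        \<le> upper_cross_moment a b d S (Min (a ` S)) y'"
      using bdd_below_upper_cross_moment[OF assms(1) ne y'] Min_le_Max_image[OF assms(1,2)]
      by (intro cINF_lower) auto
    also have "\<dots> \<le> upper_cross_moment a b d S (Min (a ` S)) (Min (b ` S))"
      using assms(1) ne y' by (intro upper_cross_moment_antimono) auto
    finally show "(INF x\<in>{Min (a ` S)..Max (a ` S)}. upper_cross_moment a b d S x y')
        \<le> upper_cross_moment a b d S (Min (a ` S)) (Min (b ` S))" .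
  qed
  finally show ?thesis .
qed

lemma cross_moment_le_of_mixture_bound:
  assumes "b k \<le> y" "y < b m" "V \<le> cross_moment a b d m x y"
    and "\<And>l. 0 \<le> l \<Longrightarrow> l \<le> 1 \<Longrightarrow> mixture_cov a b d l m k \<le> V"
  shows "cross_moment a b d k x y \<le> V"
proof -
  define l where "l = (y - b k) / (b m - b k)"
  have l: "0 \<le> l" "l < 1" using assms(1,2) by (auto simp: l_def divide_simps)
  have "l * (b m - b k) = y - b k" using assms(1,2) by (simp add: l_def)
  then have y: "y = l * b m + (1 - l) * b k" by (simp add: algebra_simps)
  have "l * V \<le> l * cross_moment a b d m x y" using assms(3) l(1) by (rule mult_left_mono)
  then have "l * V + (1 - l) * cross_moment a b d k x y \<le> mixture_cov a b d l m k"
    using mixture_cov_eq_average_cross_moment[of y l b m k a d x, OF y] by linarith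
  also have "\<dots> \<le> V" using assms(4) l by simp
  finally have "(1 - l) * cross_moment a b d k x y \<le> (1 - l) * V" by (simp add: algebra_simps)
  then show ?thesis using l by simp
qed

lemma exists_common_bound_cross_moment:
  assumes fin: "finite S" and ne: "S \<noteq> {}"
    and bound: "\<And>i j l. i \<in> S \<Longrightarrow> j \<in> S \<Longrightarrow> 0 \<le> l \<Longrightarrow> l \<le> 1 \<Longrightarrow> mixture_cov a b d l i j \<le> V"
  obtains x where "x \<in> {Min (a ` S)..Max (a ` S)}" "\<And>k. k \<in> S \<Longrightarrow> cross_moment a b d k x y \<le> V"
proof -
  txt \<open>For \<open>b m > y\<close> the map \<open>x \<mapsto> cross_moment a b d m x y\<close> is decreasing and
    reaches \<open>V\<close> at \<open>root m\<close>; \<open>x\<close> is the largest of these lower constraints.\<close>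
  define root where "root m = a m - (V - d m) / (b m - y)" for m
  define R where "R = insert (Min (a ` S)) (root ` {m \<in> S. y < b m})"
  define x where "x = Max R"
  have finR: "finite R" "R \<noteq> {}" using fin by (auto simp: R_def)
  have d_le: "d k \<le> V" if "k \<in> S" for k
    using bound[OF that that, of 1] by (simp add: mixture_cov_one)
  have cross_root: "cross_moment a b d m (root m) y = V" if "y < b m" for m
    using that by (simp add: cross_moment_def root_def)
  have "root m \<le> Max (a ` S)" if "m \<in> S" "y < b m" for m
  proof -
    have "root m \<le> a m" using d_le[OF that(1)] that(2) by (simp add: root_def)
    also have "\<dots> \<le> Max (a ` S)" using fin that(1) by simp
    finally show ?thesis .
  qed
  then have "x \<in> {Min (a ` S)..Max (a ` S)}"
    using finR Min_le_Max_image[OF fin] ne by (auto simp: x_def R_def)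
  moreover have "cross_moment a b d k x y \<le> V" if k: "k \<in> S" for k
  proof (cases "y < b k")
    case True
    have "root k \<le> x" using k True finR by (simp add: x_def R_def)
    then have "(a k - x) * (b k - y) \<le> (a k - root k) * (b k - y)"
      using True by (intro mult_right_mono) auto
    then show ?thesis using cross_root[OF True] by (simp add: cross_moment_def)
  next
    case False
    have "x \<in> R" using Max_in[OF finR] by (simp add: x_def)
    then consider "x = Min (a ` S)" | m where "m \<in> S" "y < b m" "x = root m"
      by (auto simp: R_def)
    then show ?thesis
    proof cases
      case 1
      have "(a k - x) * (b k - y) \<le> 0" using 1 fin k False by (intro mult_nonneg_nonpos) auto
      then show ?thesis using d_le[OF k] by (simp add: cross_moment_def)
    next
      case 2
      then show ?thesis
        using False cross_root bound k by (intro cross_moment_le_of_mixture_bound[of b k y m]) auto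
    qed
  qed
  ultimately show ?thesis by (intro that[of x]) auto
qed

lemma moment_upper_cov_le:
  assumes "finite S" "S \<noteq> {}"
    and "\<And>i j l. i \<in> S \<Longrightarrow> j \<in> S \<Longrightarrow> 0 \<le> l \<Longrightarrow> l \<le> 1 \<Longrightarrow> mixture_cov a b d l i j \<le> V"
  shows "moment_upper_cov a b d S \<le> V"
  unfolding moment_upper_cov_def
proof (rule cSUP_least)
  show "{Min (b ` S)..Max (b ` S)} \<noteq> {}"
    using assms(2) Min_le_Max_image[OF assms(1)] by fastforce
next
  fix y assume y: "y \<in> {Min (b ` S)..Max (b ` S)}"
  obtain x where x: "x \<in> {Min (a ` S)..Max (a ` S)}" "\<And>k. k \<in> S \<Longrightarrow> cross_moment a b d k x y \<le> V"
    using exists_common_bound_cross_moment[OF assms, where y = y] by blast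
  have "(INF x\<in>{Min (a ` S)..Max (a ` S)}. upper_cross_moment a b d S x y) \<le> upper_cross_moment a b d S x y"
    using bdd_below_upper_cross_moment[OF assms(1,2) y] x(1) by (rule cINF_lower)
  also have "\<dots> \<le> V"
    unfolding upper_cross_moment_def using x(2) assms(1,2) by simp
  finally show "(INF x\<in>{Min (a ` S)..Max (a ` S)}. upper_cross_moment a b d S x y) \<le> V" .
qed

lemma moment_upper_cov_mono:
  assumes "finite S" "T \<subseteq> S" "T \<noteq> {}"
  shows "moment_upper_cov a b d T \<le> moment_upper_cov a b d S"
proof (rule moment_upper_cov_le)
  show "finite T" using assms(1,2) by (rule finite_subset[rotated])
  show "mixture_cov a b d l i j \<le> moment_upper_cov a b d S" if "i \<in> T" "j \<in> T" "0 \<le> l" "l \<le> 1" for i j l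
    using assms(1,2) that by (intro mixture_cov_le_moment_upper_cov) auto
qed (use assms(3) in simp)

lemma card_ge_2_ex_other: "2 \<le> card S \<Longrightarrow> \<exists>j\<in>S. j \<noteq> i"
proof (rule ccontr)
  assume "2 \<le> card S" "\<not> (\<exists>j\<in>S. j \<noteq> i)"
  moreover from this have "card S \<le> card {i}" by (intro card_mono) auto
  ultimately show False by simp
qed

lemma mixture_cov_le_moment_upper_cov_pair:
  assumes "finite S" "2 \<le> card S" "i \<in> S" "j \<in> S" "0 \<le> l" "l \<le> 1"
  obtains i' j' where "i' \<in> S" "j' \<in> S" "i' \<noteq> j'"
    "mixture_cov a b d l i j \<le> moment_upper_cov a b d {i', j'}"
proof (cases "i = j")
  case True
  obtain j' where j': "j' \<in> S" "j' \<noteq> i" using card_ge_2_ex_other[OF assms(2)] by blast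
  have "mixture_cov a b d l i j = mixture_cov a b d 1 i j'"
    using True by (simp add: mixture_cov_same mixture_cov_one)
  also have "\<dots> \<le> moment_upper_cov a b d {i, j'}"
    by (rule mixture_cov_le_moment_upper_cov) auto
  finally show ?thesis using that assms(3) j' by blast
next
  case False
  have "mixture_cov a b d l i j \<le> moment_upper_cov a b d {i, j}"
    using assms(5,6) by (intro mixture_cov_le_moment_upper_cov) auto
  then show ?thesis using that assms(3,4) False by blast
qed

lemma moment_upper_cov_eq_Max_pairs:
  fixes S :: "'i::linorder set"
  assumes fin: "finite S" and card: "2 \<le> card S"
  shows "moment_upper_cov a b d S = Max {moment_upper_cov a b d {i, j} | i j. i \<in> S \<and> j \<in> S \<and> i < j}"
proof -
  define T where "T = {moment_upper_cov a b d {i, j} | i j. i \<in> S \<and> j \<in> S \<and> i < j}"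
  have ne: "S \<noteq> {}" using card by auto
  have finT: "finite T"
  proof (rule finite_subset)
    show "T \<subseteq> (\<lambda>(i, j). moment_upper_cov a b d {i, j}) ` (S \<times> S)" unfolding T_def by force
  qed (use fin in simp)
  have pair_in_T: "moment_upper_cov a b d {i, j} \<in> T" if "i \<in> S" "j \<in> S" "i \<noteq> j" for i j
  proof (cases "i < j")
    case True
    then show ?thesis using that unfolding T_def by blast
  next
    case False
    then have "j < i" using that(3) by simp
    then show ?thesis
      unfolding T_def mem_Collect_eq using that by (intro exI[of _ j] exI[of _ i]) (auto simp: insert_commute)
  qed
  have "moment_upper_cov a b d S \<le> Max T"
  proof (rule moment_upper_cov_le[OF fin ne])
    fix i j and l :: real assume "i \<in> S" "j \<in> S" "0 \<le> l" "l \<le> 1"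
    then obtain i' j' where "i' \<in> S" "j' \<in> S" "i' \<noteq> j'"
      and "mixture_cov a b d l i j \<le> moment_upper_cov a b d {i', j'}"
      by (rule mixture_cov_le_moment_upper_cov_pair[OF fin card])
    then show "mixture_cov a b d l i j \<le> Max T"
      using pair_in_T finT by (meson Max_ge order_trans)
  qed
  moreover have "Max T \<le> moment_upper_cov a b d S"
  proof -
    obtain i where "i \<in> S" using ne by blast
    then have "T \<noteq> {}" using card_ge_2_ex_other[OF card] pair_in_T by blast
    then have "Max T \<in> T" using finT by simp
    then obtain i j where "Max T = moment_upper_cov a b d {i, j}" "i \<in> S" "j \<in> S"
      unfolding T_def by blast
    then show ?thesis using moment_upper_cov_mono[OF fin, of "{i, j}"] by simp
  qed
  ultimately show ?thesis unfolding T_def by simp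
qed

lemma integrable_mult_of_square_integrable:
  fixes X Y :: "'a \<Rightarrow> real"
  assumes "X \<in> borel_measurable M" "Y \<in> borel_measurable M"
    and "integrable M (\<lambda>\<omega>. (X \<omega>)\<^sup>2)" "integrable M (\<lambda>\<omega>. (Y \<omega>)\<^sup>2)"
  shows "integrable M (\<lambda>\<omega>. X \<omega> * Y \<omega>)"
proof (rule Bochner_Integration.integrable_bound)
  show "integrable M (\<lambda>\<omega>. (X \<omega>)\<^sup>2 + (Y \<omega>)\<^sup>2)" using assms(3,4) by simp
  have "\<bar>u * v\<bar> \<le> u\<^sup>2 + v\<^sup>2" for u v :: real
  proof -
    have "2 * \<bar>u\<bar> * \<bar>v\<bar> \<le> u\<^sup>2 + v\<^sup>2" using sum_squares_bound[of "\<bar>u\<bar>" "\<bar>v\<bar>"] by simp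
    moreover have "0 \<le> \<bar>u\<bar> * \<bar>v\<bar>" by simp
    ultimately show ?thesis unfolding abs_mult by linarith
  qed
  then show "AE \<omega> in M. norm (X \<omega> * Y \<omega>) \<le> norm ((X \<omega>)\<^sup>2 + (Y \<omega>)\<^sup>2)" by simp
qed (use assms(1,2) in simp)

lemma (in prob_space) expectation_shifted_product:
  fixes X Y :: "'a \<Rightarrow> real"
  assumes "X \<in> borel_measurable M" "Y \<in> borel_measurable M"
    and "integrable M (\<lambda>\<omega>. (X \<omega>)\<^sup>2)" "integrable M (\<lambda>\<omega>. (Y \<omega>)\<^sup>2)"
  shows "expectation (\<lambda>\<omega>. (X \<omega> - x) * (Y \<omega> - y))
    = (expectation (\<lambda>\<omega>. X \<omega> * Y \<omega>) - expectation X * expectation Y)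
      + (expectation X - x) * (expectation Y - y)"
proof -
  have "integrable M X" "integrable M Y"
    using assms square_integrable_imp_integrable by blast+
  moreover have "integrable M (\<lambda>\<omega>. X \<omega> * Y \<omega>)"
    using assms by (rule integrable_mult_of_square_integrable)
  moreover have "(\<lambda>\<omega>. (X \<omega> - x) * (Y \<omega> - y)) = (\<lambda>\<omega>. (X \<omega> * Y \<omega> - y * X \<omega>) - (x * Y \<omega> - x * y))"
    by (auto simp: algebra_simps)
  ultimately show ?thesis by (simp add: prob_space algebra_simps)
qed

lemma upper_exp_image_eq_Max:
  "finite S \<Longrightarrow> S \<noteq> {} \<Longrightarrow> upper_exp (P ` S) Z = Max ((\<lambda>i. integral\<^sup>L (P i) Z) ` S)"
  unfolding upper_exp_def by (simp add: image_image cSup_eq_Max)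

lemma lower_mean_image_eq_Min:
  "finite S \<Longrightarrow> S \<noteq> {} \<Longrightarrow> lower_mean (P ` S) W = Min ((\<lambda>i. integral\<^sup>L (P i) W) ` S)"
  unfolding lower_mean_def by (simp add: upper_exp_image_eq_Max image_image)

lemma upper_cov_eq_moment_upper_cov:
  fixes X Y :: "'a \<Rightarrow> real"
  assumes "finite S" "S \<noteq> {}"
    and "\<And>i. i \<in> S \<Longrightarrow> prob_space (P i)" "\<And>i. i \<in> S \<Longrightarrow> sets (P i) = sets M"
    and "X \<in> borel_measurable M" "Y \<in> borel_measurable M"
    and "\<And>i. i \<in> S \<Longrightarrow> integrable (P i) (\<lambda>\<omega>. (X \<omega>)\<^sup>2)"
    and "\<And>i. i \<in> S \<Longrightarrow> integrable (P i) (\<lambda>\<omega>. (Y \<omega>)\<^sup>2)"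
  shows "upper_cov (P ` S) X Y
    = moment_upper_cov (\<lambda>i. integral\<^sup>L (P i) X) (\<lambda>i. integral\<^sup>L (P i) Y)
        (\<lambda>i. integral\<^sup>L (P i) (\<lambda>\<omega>. X \<omega> * Y \<omega>) - integral\<^sup>L (P i) X * integral\<^sup>L (P i) Y) S"
    (is "_ = moment_upper_cov ?a ?b ?d S")
proof -
  have "integral\<^sup>L (P i) (\<lambda>\<omega>. (X \<omega> - x) * (Y \<omega> - y)) = cross_moment ?a ?b ?d i x y"
    if i: "i \<in> S" for i x y
  proof -
    interpret prob_space "P i" using assms(3)[OF i] .
    have "X \<in> borel_measurable (P i)" "Y \<in> borel_measurable (P i)"
      using assms(4)[OF i] assms(5,6) by (simp_all cong: measurable_cong_sets)
    then show ?thesis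
      using expectation_shifted_product assms(7,8)[OF i] by (simp add: cross_moment_def)
  qed
  then have "upper_exp (P ` S) (\<lambda>\<omega>. (X \<omega> - x) * (Y \<omega> - y)) = upper_cross_moment ?a ?b ?d S x y"
    for x y
    using assms(1,2) by (simp add: upper_exp_image_eq_Max upper_cross_moment_def)
  then show ?thesis
    using assms(1,2)
    by (simp add: upper_cov_def moment_upper_cov_def upper_mean_def upper_exp_image_eq_Max
        lower_mean_image_eq_Min image_image)
qed

theorem proposition4p2:
  fixes M :: "'a measure" and P :: "nat \<Rightarrow> 'a measure" and K :: nat
    and X Y :: "'a \<Rightarrow> real"
  assumes "K \<ge> 2"
    and "\<And>i. i \<in> {1..K} \<Longrightarrow> prob_space (P i)"
    and "\<And>i. i \<in> {1..K} \<Longrightarrow> sets (P i) = sets M"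
    and "X \<in> borel_measurable M" and "Y \<in> borel_measurable M"
    and "\<And>i. i \<in> {1..K} \<Longrightarrow> integrable (P i) (\<lambda>\<omega>. (X \<omega>)\<^sup>2)"
    and "\<And>i. i \<in> {1..K} \<Longrightarrow> integrable (P i) (\<lambda>\<omega>. (Y \<omega>)\<^sup>2)"
  shows "upper_cov (P ` {1..K}) X Y
           = Max {upper_cov {P i, P j} X Y | i j. 1 \<le> i \<and> i < j \<and> j \<le> K}"
proof -
  let ?a = "\<lambda>i. integral\<^sup>L (P i) X" and ?b = "\<lambda>i. integral\<^sup>L (P i) Y"
  let ?d = "\<lambda>i. integral\<^sup>L (P i) (\<lambda>\<omega>. X \<omega> * Y \<omega>) - ?a i * ?b i"
  have cov: "upper_cov (P ` S) X Y = moment_upper_cov ?a ?b ?d S" if "S \<subseteq> {1..K}" "S \<noteq> {}" for S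
    using that finite_subset[OF that(1)] assms(2-7) by (intro upper_cov_eq_moment_upper_cov) auto
  have pair: "upper_cov {P i, P j} X Y = moment_upper_cov ?a ?b ?d {i, j}"
    if "1 \<le> i" "i < j" "j \<le> K" for i j
    using cov[of "{i, j}"] that by simp
  have index: "i \<in> {1..K} \<and> j \<in> {1..K} \<and> i < j \<longleftrightarrow> 1 \<le> i \<and> i < j \<and> j \<le> K" for i j :: nat
    by auto
  have "upper_cov (P ` {1..K}) X Y = moment_upper_cov ?a ?b ?d {1..K}"
    using cov assms(1) by simp
  also have "\<dots> = Max {moment_upper_cov ?a ?b ?d {i, j} | i j. i \<in> {1..K} \<and> j \<in> {1..K} \<and> i < j}"
    using assms(1) by (intro moment_upper_cov_eq_Max_pairs) simp_all
  also have "{moment_upper_cov ?a ?b ?d {i, j} | i j. i \<in> {1..K} \<and> j \<in> {1..K} \<and> i < j}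
      = {upper_cov {P i, P j} X Y | i j. 1 \<le> i \<and> i < j \<and> j \<le> K}"
    unfolding index using pair by (intro Collect_cong ex_cong1) auto
  finally show ?thesis .
qed

end
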